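(* Let $H$ be a complex Hilbert space, let $R \in \mathcal{L}(H)$ be an isometry (i.e. $\|Rx\| = \|x\|$ for all $x\in H$), and let $T \in \mathcal{L}(H)$ satisfy the property $\mathcal{AN}^*$. Then $TR$ and $RT$ satisfy the property $\mathcal{AN}^*$.
   Context: $\mathcal{L}(H)$ is the space of bounded linear operators on $H$. For a closed subspace $M \neq \{0\}$ of $H$ and $T \in \mathcal{L}(H)$, write $[T|_M] := \inf\{\|Tx\| : x \in M, \|x\|=1\}$; $T|_M$ satisfies the property $\mathcal{N}^*$ if there exists $x_0 \in M$ with $\|x_0\| = 1$ and $\|Tx_0\| = [T|_M]$. $T$ satisfies the property $\mathcal{AN}^*$ if for every closed subspace $M \neq \{0\}$ of $H$, $T|_M$ satisfies $\mathcal{N}^*$. *)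

theory Defs
  imports "HOL-Analysis.Analysis"
begin

text \<open>A complex Hilbert space is modelled as a real Hilbert space (type class
  real_inner + complete_space) equipped with an orthogonal complex structure J
  (multiplication by the imaginary unit): J is real-linear, J (J x) = - x and
  J preserves the real inner product.  Complex scalar multiplication is then
  (a + i b) x = a x + b J x, the norm is unchanged.\<close>

definition complex_structure :: "('a::real_inner \<Rightarrow> 'a) \<Rightarrow> bool" where
  "complex_structure J \<longleftrightarrow> linear J \<and> (\<forall>x. J (J x) = - x) \<and> (\<forall>x y. inner (J x) (J y) = inner x y)"

definition scaleJ :: "('a::real_vector \<Rightarrow> 'a) \<Rightarrow> complex \<Rightarrow> 'a \<Rightarrow> 'a" where
  "scaleJ J c x = Re c *\<^sub>R x + Im c *\<^sub>R J x"

definition csubspace :: "('a::real_vector \<Rightarrow> 'a) \<Rightarrow> 'a set \<Rightarrow> bool" where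
  "csubspace J M \<longleftrightarrow> 0 \<in> M \<and> (\<forall>x\<in>M. \<forall>y\<in>M. x + y \<in> M) \<and> (\<forall>c x. x \<in> M \<longrightarrow> scaleJ J c x \<in> M)"

definition bounded_clinearJ :: "('a::real_normed_vector \<Rightarrow> 'a) \<Rightarrow> ('a \<Rightarrow> 'a) \<Rightarrow> bool" where
  "bounded_clinearJ J T \<longleftrightarrow> bounded_linear T \<and> (\<forall>c x. T (scaleJ J c x) = scaleJ J c (T x))"

definition restr_lower_bound :: "('a::real_normed_vector \<Rightarrow> 'a) \<Rightarrow> 'a set \<Rightarrow> real" where
  "restr_lower_bound T M = Inf {norm (T x) | x. x \<in> M \<and> norm x = 1}"

definition N_star :: "('a::real_normed_vector \<Rightarrow> 'a) \<Rightarrow> 'a set \<Rightarrow> bool" where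
  "N_star T M \<longleftrightarrow> (\<exists>x0\<in>M. norm x0 = 1 \<and> norm (T x0) = restr_lower_bound T M)"

definition AN_star :: "('a::real_normed_vector \<Rightarrow> 'a) \<Rightarrow> ('a \<Rightarrow> 'a) \<Rightarrow> bool" where
  "AN_star J T \<longleftrightarrow> (\<forall>M. csubspace J M \<and> closed M \<and> M \<noteq> {0} \<longrightarrow> N_star T M)"

end

theory Submission
  imports Defs
begin

text \<open>An isometry R does not change any of the norms in the infimum defining the lower bound:
  for R T this is immediate, and for T R one passes from M to the subspace R M, which is again a
  nonzero closed complex subspace because R is complex-linear and, being an isometry, maps the
  complete space M onto a complete (hence closed) set.\<close>

lemma csubspace_imp_subspace:
  assumes "csubspace J M"
  shows "subspace M"
  unfolding subspace_def
proof (intro conjI ballI allI)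
  show "0 \<in> M" and "\<And>x y. x \<in> M \<Longrightarrow> y \<in> M \<Longrightarrow> x + y \<in> M"
    using assms by (simp_all add: csubspace_def)
next
  fix c :: real and x assume "x \<in> M"
  then have "scaleJ J (of_real c) x \<in> M" using assms by (simp add: csubspace_def)
  then show "c *\<^sub>R x \<in> M" by (simp add: scaleJ_def)
qed

lemma csubspace_image:
  assumes "bounded_clinearJ J R" and "csubspace J M"
  shows "csubspace J (R ` M)"
proof -
  interpret R: bounded_linear R using assms(1) by (simp add: bounded_clinearJ_def)
  have scale: "R (scaleJ J c x) = scaleJ J c (R x)" for c x
    using assms(1) by (simp add: bounded_clinearJ_def)
  have "0 \<in> R ` M"
    using assms(2) R.zero unfolding csubspace_def by (metis image_eqI)
  moreover have "R u + R v \<in> R ` M" if "u \<in> M" "v \<in> M" for u v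
    using that assms(2) R.add[of u v, symmetric] unfolding csubspace_def by blast
  moreover have "scaleJ J c (R u) \<in> R ` M" if "u \<in> M" for c u
    using that assms(2) scale[of c u, symmetric] unfolding csubspace_def by blast
  ultimately show ?thesis unfolding csubspace_def by blast
qed

text \<open>The sort is spelt out rather than written as banach: the intersection sort
  {real_inner, complete_space} of the theorem is not a subsort of banach.\<close>

lemma closed_isometric_image:
  fixes R :: "'a::{real_normed_vector, complete_space} \<Rightarrow> 'b::real_normed_vector"
  assumes "bounded_linear R" and "\<And>x. norm (R x) = norm x" and "subspace M" and "closed M"
  shows "closed (R ` M)"
proof -
  have "complete M" using assms(4) by (simp add: complete_eq_closed)
  then have "complete (R ` M)"
    using complete_isometric_image[of 1 M R] assms(1-3) by simp
  then show ?thesis by (rule complete_imp_closed)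
qed

lemma restr_lower_bound_isometry_comp:
  assumes "\<And>x. norm (R x) = norm x"
  shows "restr_lower_bound (R \<circ> T) M = restr_lower_bound T M"
  unfolding restr_lower_bound_def using assms by simp

lemma restr_lower_bound_isometric_image:
  assumes "\<And>x. norm (R x) = norm x"
  shows "restr_lower_bound T (R ` M) = restr_lower_bound (T \<circ> R) M"
proof -
  have "{norm (T y) | y. y \<in> R ` M \<and> norm y = 1} = {norm ((T \<circ> R) x) | x. x \<in> M \<and> norm x = 1}"
    using assms by auto
  then show ?thesis unfolding restr_lower_bound_def by simp
qed

lemma N_star_isometry_comp:
  assumes "\<And>x. norm (R x) = norm x" and "N_star T M"
  shows "N_star (R \<circ> T) M"
  using assms by (simp add: N_star_def restr_lower_bound_isometry_comp)

lemma N_star_comp_isometry: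
  assumes "\<And>x. norm (R x) = norm x" and "N_star T (R ` M)"
  shows "N_star (T \<circ> R) M"
proof -
  obtain x where "x \<in> M" "norm (R x) = 1" "norm (T (R x)) = restr_lower_bound T (R ` M)"
    using assms(2) unfolding N_star_def by blast
  then show ?thesis
    unfolding N_star_def using assms(1) by (auto simp: restr_lower_bound_isometric_image)
qed

lemma AN_star_isometry_comp:
  assumes "\<And>x. norm (R x) = norm x" and "AN_star J T"
  shows "AN_star J (R \<circ> T)"
  using assms N_star_isometry_comp unfolding AN_star_def by blast

lemma AN_star_comp_isometry:
  fixes R T :: "'a::{real_normed_vector, complete_space} \<Rightarrow> 'a"
  assumes R: "bounded_clinearJ J R" and iso: "\<And>x. norm (R x) = norm x" and T: "AN_star J T"
  shows "AN_star J (T \<circ> R)"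
  unfolding AN_star_def
proof (intro allI impI)
  fix M assume M: "csubspace J M \<and> closed M \<and> M \<noteq> {0}"
  have "bounded_linear R" using R by (simp add: bounded_clinearJ_def)
  moreover have "subspace M" using M csubspace_imp_subspace by blast
  ultimately have "closed (R ` M)" using M closed_isometric_image iso by blast
  moreover have "csubspace J (R ` M)" using csubspace_image R M by blast
  moreover have "R ` M \<noteq> {0}"
  proof -
    obtain z where "z \<in> M" "z \<noteq> 0" using M unfolding csubspace_def by blast
    moreover from \<open>z \<noteq> 0\<close> have "R z \<noteq> 0" using iso[of z] by auto
    ultimately show ?thesis by blast
  qed
  ultimately have "N_star T (R ` M)" using T unfolding AN_star_def by blast
  then show "N_star (T \<circ> R) M" using N_star_comp_isometry iso by blast
qed

theorem proposition3p3:
  fixes J R T :: "'a::{real_inner, complete_space} \<Rightarrow> 'a"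
  assumes "complex_structure J"
    and "bounded_clinearJ J R"
    and "\<forall>x. norm (R x) = norm x"
    and "bounded_clinearJ J T"
    and "AN_star J T"
  shows "AN_star J (T \<circ> R) \<and> AN_star J (R \<circ> T)"
  using AN_star_comp_isometry[OF assms(2) _ assms(5)] AN_star_isometry_comp[OF _ assms(5)] assms(3)
  by blast

end
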